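(* There is no $8$-divisible set of points of cardinality $52$ in $\mathrm{PG}(v-1,2)$, for any $v\ge1$.
   Context: $\mathrm{PG}(v-1,2)$ is the set of $1$-dimensional subspaces (points) of $\mathbb{F}_2^v$; hyperplanes are the $(v-1)$-dimensional subspaces. A set $\mathcal{C}$ of points is $\Delta$-divisible if there is an integer $u$ with $|\mathcal{C}\cap H|\equiv u\pmod{\Delta}$ for every hyperplane $H$, where $\mathcal{C}\cap H$ is the set of points of $\mathcal{C}$ contained in $H$. *)

theory Defs
  imports "HOL-Analysis.Analysis" "HOL-Library.Z2"
begin

text \<open>The ambient space is \<open>F_2^v\<close>, modelled as \<open>bit ^ 'n\<close> with \<open>v = CARD('n)\<close>
  (any finite index type, so \<open>v \<ge> 1\<close> is arbitrary).
  Over \<open>F_2\<close> a 1-dimensional subspace \<open>{0, x}\<close> is determined by its unique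
  nonzero vector \<open>x\<close>, so points of \<open>PG(v-1,2)\<close> are the nonzero vectors.\<close>

definition pg_points :: "(bit ^ 'n) set" where
  "pg_points = {x. x \<noteq> 0}"

text \<open>Hyperplanes (subspaces of dimension \<open>v-1\<close>) are exactly the kernels of the
  nonzero linear functionals \<open>x \<mapsto> \<Sum>i. a_i x_i\<close>; the points contained in the
  hyperplane with normal vector \<open>a\<close> are: \<close>

definition hyperplane_points :: "bit ^ 'n \<Rightarrow> (bit ^ 'n) set" where
  "hyperplane_points a = {x \<in> pg_points. (\<Sum>i\<in>UNIV. a $ i * x $ i) = 0}"

definition pg_hyperplanes :: "((bit ^ 'n) set) set" where
  "pg_hyperplanes = {hyperplane_points a | a. a \<noteq> 0}"

definition delta_divisible :: "nat \<Rightarrow> (bit ^ 'n) set \<Rightarrow> bool" where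
  "delta_divisible \<Delta> C \<longleftrightarrow>
     (\<exists>u::int. \<forall>H\<in>pg_hyperplanes. int (card (C \<inter> H)) mod int \<Delta> = u mod int \<Delta>)"

end

theory Submission
  imports Defs "HOL-Number_Theory.Cong"
begin

(* Let g(a) = sum over x in C of (-1)^(a.x) be the Walsh coefficients of the point set C.
   Over all a in F_2^v their power sums are: sum g = 0 (as 0 is not in C), sum g^2 = 2^v |C|,
   and sum g^3 = 2^v #{(x,y,z) in C^3. x + y + z = 0} >= 0.  Since g(a) = 2 |C cap a^perp| - |C|,
   8-divisibility makes all g(a) with a <> 0 congruent modulo 16, and the first power sum forces
   the common residue to be |C| = 52.  So every g(a) lies in {..., -12, 4, 20, 36, 52}, where the
   cubic (52 - g)(g - 4)(g + 12) is nonnegative; but its sum over all a, computed from the power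
   sums, is -208 * 2^v - sum g^3 < 0. *)

(* treat F_2 as a field, not as a ring of bit operations *)
declare mult_bit_eq_and [simp del] add_bit_eq_xor [simp del]

lemma UNIV_bit: "(UNIV :: bit set) = {0, 1}"
  by (auto intro: bit.exhaust)

instance bit :: finite
  by standard (simp add: UNIV_bit)

lemma card_vec_bit: "CARD(bit ^ 'n) = 2 ^ CARD('n)"
  by (simp add: UNIV_bit numeral_2_eq_2)

lemma two_power_dvd_card_vec_bit:
  assumes "2 ^ k \<le> CARD(bit ^ 'n)"
  shows "2 ^ k dvd CARD(bit ^ 'n)"
proof -
  have "k \<le> CARD('n)"
    using power_le_imp_le_exp[of "2::nat" k "CARD('n)"] assms unfolding card_vec_bit by simp
  then show ?thesis
    unfolding card_vec_bit by (rule le_imp_power_dvd)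
qed

lemma card_pg_points: "card (pg_points :: (bit ^ 'n) set) = CARD(bit ^ 'n) - 1"
proof -
  have "(pg_points :: (bit ^ 'n) set) = UNIV - {0}"
    by (auto simp: pg_points_def)
  then show ?thesis
    by (metis card_Diff_singleton finite UNIV_I)
qed

lemma bit_add_self_eq_0: "(x :: bit ^ 'n) + x = 0"
  by (simp add: vec_eq_iff)

lemma bit_add_eq_0_iff: "(x :: bit ^ 'n) + y = 0 \<longleftrightarrow> x = y"
  by (metis add.assoc add_0 bit_add_self_eq_0)

definition bit_inner :: "bit ^ 'n \<Rightarrow> bit ^ 'n \<Rightarrow> bit" where
  "bit_inner a x = (\<Sum>i\<in>UNIV. a $ i * x $ i)"

lemma bit_inner_add_left: "bit_inner (a + b) x = bit_inner a x + bit_inner b x"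
  unfolding bit_inner_def by (simp only: vector_add_component distrib_right sum.distrib)

lemma bit_inner_add_right: "bit_inner a (x + y) = bit_inner a x + bit_inner a y"
  unfolding bit_inner_def by (simp only: vector_add_component distrib_left sum.distrib)

lemma bit_inner_zero_left [simp]: "bit_inner 0 x = 0"
  by (simp add: bit_inner_def)

lemma bit_inner_zero_right [simp]: "bit_inner a 0 = 0"
  by (simp add: bit_inner_def)

lemma bit_inner_axis: "bit_inner (axis i 1) x = x $ i"
proof -
  have "(if j = i then 1 else 0) * x $ j = (if j = i then x $ i else 0)" for j
    by simp
  then show ?thesis
    by (simp add: bit_inner_def axis_def)
qed

definition walsh_char :: "bit ^ 'n \<Rightarrow> bit ^ 'n \<Rightarrow> int" where
  "walsh_char a x = (if bit_inner a x = 0 then 1 else -1)"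

lemma walsh_char_add: "walsh_char a (x + y) = walsh_char a x * walsh_char a y"
  unfolding walsh_char_def bit_inner_add_right
  by (cases "bit_inner a x"; cases "bit_inner a y") auto

lemma sum_walsh_char:
  fixes s :: "bit ^ 'n"
  shows "(\<Sum>a\<in>UNIV. walsh_char a s) = (if s = 0 then int CARD(bit ^ 'n) else 0)"
proof (cases "s = 0")
  case True
  then show ?thesis
    by (simp add: walsh_char_def del: CARD_vec)
next
  case False
  then obtain i where "s $ i \<noteq> 0"
    by (metis vec_eq_iff zero_index)
  then have flip: "walsh_char (a + axis i 1) s = - walsh_char a s" for a
    unfolding walsh_char_def bit_inner_add_left bit_inner_axis
    by (cases "bit_inner a s") auto
  have "(\<Sum>a\<in>UNIV. walsh_char a s) = (\<Sum>a\<in>UNIV. walsh_char (a + axis i 1) s)"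
    by (rule sum.reindex_bij_witness[where i="\<lambda>a. a + axis i 1" and j="\<lambda>a. a + axis i 1"])
       (simp_all add: add.assoc bit_add_self_eq_0)
  also have "\<dots> = - (\<Sum>a\<in>UNIV. walsh_char a s)"
    by (simp add: flip sum_negf)
  finally show ?thesis
    using False by simp
qed

definition walsh :: "(bit ^ 'n) set \<Rightarrow> bit ^ 'n \<Rightarrow> int" where
  "walsh C a = (\<Sum>x\<in>C. walsh_char a x)"

lemma walsh_zero: "walsh C 0 = int (card C)"
  by (simp add: walsh_def walsh_char_def)

lemma walsh_le_card: "walsh C a \<le> int (card C)"
  using sum_bounded_above[of C "walsh_char a" 1]
  by (simp add: walsh_def walsh_char_def)

lemma walsh_eq_card_hyperplane:
  assumes "C \<subseteq> pg_points"
  shows "walsh C a = 2 * int (card (C \<inter> hyperplane_points a)) - int (card C)"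
proof -
  have "C \<inter> hyperplane_points a = C \<inter> {x. bit_inner a x = 0}"
    using assms by (auto simp: hyperplane_points_def bit_inner_def)
  moreover have "walsh_char a x = 2 * of_bool (bit_inner a x = 0) - 1" for x
    by (simp add: walsh_char_def)
  ultimately show ?thesis
    by (simp add: walsh_def sum_subtractf sum_distrib_left[symmetric])
qed

lemma sum_walsh:
  fixes C :: "(bit ^ 'n) set"
  shows "(\<Sum>a\<in>UNIV. walsh C a) = (if 0 \<in> C then int CARD(bit ^ 'n) else 0)"
proof -
  have "(\<Sum>a\<in>UNIV. walsh C a) = (\<Sum>x\<in>C. \<Sum>a\<in>UNIV. walsh_char a x)"
    unfolding walsh_def by (rule sum.swap)
  also have "\<dots> = (\<Sum>x\<in>C. if x = 0 then int CARD(bit ^ 'n) else 0)"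
    by (simp only: sum_walsh_char)
  finally show ?thesis
    by (simp add: sum.delta del: CARD_vec)
qed

lemma sum_walsh_square:
  fixes C :: "(bit ^ 'n) set"
  shows "(\<Sum>a\<in>UNIV. (walsh C a)\<^sup>2) = int CARD(bit ^ 'n) * int (card C)"
proof -
  have "(\<Sum>a\<in>UNIV. (walsh C a)\<^sup>2) = (\<Sum>a\<in>UNIV. \<Sum>x\<in>C. \<Sum>y\<in>C. walsh_char a (x + y))"
    unfolding walsh_def power2_eq_square sum_product walsh_char_add ..
  also have "\<dots> = (\<Sum>x\<in>C. \<Sum>y\<in>C. \<Sum>a\<in>UNIV. walsh_char a (x + y))"
    by (simp only: sum.swap[of _ UNIV])
  also have "\<dots> = (\<Sum>x\<in>C. \<Sum>y\<in>C. if x = y then int CARD(bit ^ 'n) else 0)"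
    by (simp only: sum_walsh_char bit_add_eq_0_iff)
  finally show ?thesis
    by (simp add: sum.delta del: CARD_vec)
qed

lemma sum_walsh_cube_nonneg: "0 \<le> (\<Sum>a\<in>UNIV. (walsh C a) ^ 3)"
proof -
  have "(\<Sum>a\<in>UNIV. (walsh C a) ^ 3)
      = (\<Sum>a\<in>UNIV. \<Sum>x\<in>C. \<Sum>y\<in>C. \<Sum>z\<in>C. walsh_char a (x + y + z))"
    unfolding walsh_def power3_eq_cube sum_distrib_left sum_distrib_right walsh_char_add
    by (simp add: mult_ac)
  also have "\<dots> = (\<Sum>x\<in>C. \<Sum>y\<in>C. \<Sum>z\<in>C. \<Sum>a\<in>UNIV. walsh_char a (x + y + z))"
    by (simp only: sum.swap[of _ UNIV])
  also have "\<dots> \<ge> 0"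
    unfolding sum_walsh_char by (intro sum_nonneg) simp
  finally show ?thesis .
qed

lemma delta_divisible_walsh_cong_const:
  fixes C :: "(bit ^ 'n) set"
  assumes "C \<subseteq> pg_points" and "delta_divisible \<Delta> C"
  obtains c where "\<And>a. a \<noteq> 0 \<Longrightarrow> [walsh C a = c] (mod 2 * int \<Delta>)"
proof -
  obtain u :: int
    where u: "\<And>H. H \<in> pg_hyperplanes \<Longrightarrow> [int (card (C \<inter> H)) = u] (mod int \<Delta>)"
    using assms(2) unfolding delta_divisible_def cong_def by blast
  have "[walsh C a = 2 * u - int (card C)] (mod 2 * int \<Delta>)" if "a \<noteq> 0" for a
  proof -
    have "hyperplane_points a \<in> pg_hyperplanes"
      using that by (auto simp: pg_hyperplanes_def)
    then have "int \<Delta> dvd int (card (C \<inter> hyperplane_points a)) - u"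
      using u cong_iff_dvd_diff by blast
    then have "2 * int \<Delta> dvd 2 * int (card (C \<inter> hyperplane_points a)) - 2 * u"
      by (metis mult_dvd_mono dvd_refl right_diff_distrib)
    then show ?thesis
      by (simp add: cong_iff_dvd_diff walsh_eq_card_hyperplane[OF assms(1)])
  qed
  then show ?thesis
    using that by blast
qed

text \<open>Summing over all \<open>a\<close>: \<open>0 = |C| + (2^v - 1) c\<close>, which forces \<open>c \<equiv> |C|\<close> once the
  modulus divides \<open>2^v\<close>.\<close>

lemma walsh_cong_card:
  fixes C :: "(bit ^ 'n) set"
  assumes "C \<subseteq> pg_points" and "delta_divisible \<Delta> C" and "2 * \<Delta> dvd CARD(bit ^ 'n)"
  shows "[walsh C a = int (card C)] (mod 2 * int \<Delta>)"
proof -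
  let ?m = "2 * int \<Delta>" and ?N = "int CARD(bit ^ 'n)"
  obtain c where c: "\<And>a. a \<noteq> 0 \<Longrightarrow> [walsh C a = c] (mod ?m)"
    using delta_divisible_walsh_cong_const[OF assms(1,2)] by blast
  have "int (2 * \<Delta>) dvd ?N"
    using assms(3) by (simp only: int_dvd_int_iff)
  then have N: "[?N * c = 0] (mod ?m)"
    by (simp add: cong_0_iff)
  have "0 \<notin> C"
    using assms(1) by (auto simp: pg_points_def)
  have card_nonzero: "int (card (UNIV - {0 :: bit ^ 'n})) = ?N - 1"
    by (simp add: card_Diff_singleton of_nat_diff Suc_le_eq del: CARD_vec)
  have sum0: "int (card C) + (\<Sum>a\<in>UNIV - {0}. walsh C a) = 0"
    using \<open>0 \<notin> C\<close> sum_walsh[of C] by (simp add: sum.remove[of UNIV 0] walsh_zero)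
  have "[int (card C) + (\<Sum>a\<in>UNIV - {0}. walsh C a)
      = int (card C) + (\<Sum>a\<in>UNIV - {0 :: bit ^ 'n}. c)] (mod ?m)"
    by (intro cong_add cong_refl cong_sum) (simp add: c)
  also have "int (card C) + (\<Sum>a\<in>UNIV - {0 :: bit ^ 'n}. c) = int (card C) - c + ?N * c"
    by (simp only: sum_constant card_nonzero) (simp add: algebra_simps)
  also have "[int (card C) - c + ?N * c = int (card C) - c + 0] (mod ?m)"
    by (intro cong_add cong_refl N)
  finally have "[0 = int (card C) - c + 0] (mod ?m)"
    by (simp only: sum0)
  then have c_card: "[c = int (card C)] (mod ?m)"
    by (simp add: cong_iff_dvd_diff)
  show ?thesis
  proof (cases "a = 0")
    case False
    show ?thesis
      using cong_trans[OF c[OF False] c_card] .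
  qed (simp add: walsh_zero)
qed

lemma cong_imp_consecutive_product_nonneg:
  fixes t r m :: int
  assumes "[t = r] (mod m)"
  shows "0 \<le> (t - r) * (t - r - m)"
proof -
  obtain k where k: "t - r = m * k"
    using assms by (auto simp: cong_iff_dvd_diff elim: dvdE)
  have "0 \<le> k * (k - 1)"
    by (cases "k \<le> 0") (auto intro: mult_nonpos_nonpos)
  then have "0 \<le> m\<^sup>2 * (k * (k - 1))"
    by simp
  then show ?thesis
    by (simp add: k power2_eq_square algebra_simps)
qed

lemma sum_walsh_cubic:
  fixes C :: "(bit ^ 'n) set" and \<alpha> \<beta> :: int
  assumes "0 \<notin> C"
  defines "n \<equiv> int (card C)"
  shows "(\<Sum>a\<in>UNIV. (n - walsh C a) * (walsh C a - \<alpha>) * (walsh C a - \<beta>))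
    = int CARD(bit ^ 'n) * n * (n + \<alpha> + \<beta> + \<alpha> * \<beta>) - (\<Sum>a\<in>UNIV. (walsh C a) ^ 3)"
proof -
  let ?N = "int CARD(bit ^ 'n)" and ?g = "walsh C"
  have "(n - g) * (g - \<alpha>) * (g - \<beta>)
      = (n + \<alpha> + \<beta>) * g\<^sup>2 - (n * (\<alpha> + \<beta>) + \<alpha> * \<beta>) * g + n * \<alpha> * \<beta> - g ^ 3" for g
    by (simp add: algebra_simps power2_eq_square power3_eq_cube)
  then have "(\<Sum>a\<in>UNIV. (n - ?g a) * (?g a - \<alpha>) * (?g a - \<beta>))
      = (n + \<alpha> + \<beta>) * (\<Sum>a\<in>UNIV. (?g a)\<^sup>2)
      - (n * (\<alpha> + \<beta>) + \<alpha> * \<beta>) * (\<Sum>a\<in>UNIV. ?g a) + ?N * (n * \<alpha> * \<beta>)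
      - (\<Sum>a\<in>UNIV. (?g a) ^ 3)"
    by (simp only: sum_subtractf sum.distrib sum_distrib_left[symmetric] sum_constant)
      (simp only: mult_ac)
  also have "\<dots> = ?N * n * (n + \<alpha> + \<beta> + \<alpha> * \<beta>) - (\<Sum>a\<in>UNIV. (?g a) ^ 3)"
    unfolding sum_walsh_square sum_walsh n_def using assms(1) by (simp add: algebra_simps)
  finally show ?thesis .
qed

lemma walsh_cubic_bound:
  fixes C :: "(bit ^ 'n) set" and \<alpha> \<beta> :: int
  assumes "0 \<notin> C" and "C \<noteq> {}"
    and nonneg: "\<And>a. 0 \<le> (int (card C) - walsh C a) * (walsh C a - \<alpha>) * (walsh C a - \<beta>)"
  shows "0 \<le> int (card C) + \<alpha> + \<beta> + \<alpha> * \<beta>"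
proof -
  have "0 \<le> (\<Sum>a\<in>UNIV. (int (card C) - walsh C a) * (walsh C a - \<alpha>) * (walsh C a - \<beta>))"
    by (intro sum_nonneg nonneg)
  then have "0 \<le> int CARD(bit ^ 'n) * int (card C) * (int (card C) + \<alpha> + \<beta> + \<alpha> * \<beta>)"
    using sum_walsh_cube_nonneg[of C] unfolding sum_walsh_cubic[OF assms(1)] by linarith
  moreover have "0 < int CARD(bit ^ 'n) * int (card C)"
    using assms(2) by (simp add: card_gt_0_iff)
  ultimately show ?thesis
    by (simp add: zero_le_mult_iff)
qed

theorem lemma5p10:
  shows "\<not> (\<exists>C :: (bit ^ 'n) set. C \<subseteq> pg_points \<and> card C = 52 \<and> delta_divisible 8 C)"
proof
  assume "\<exists>C :: (bit ^ 'n) set. C \<subseteq> pg_points \<and> card C = 52 \<and> delta_divisible 8 C"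
  then obtain C :: "(bit ^ 'n) set"
    where C: "C \<subseteq> pg_points" "card C = 52" "delta_divisible 8 C"
    by blast
  have "0 \<notin> C" and "C \<noteq> {}"
    using C(1,2) by (auto simp: pg_points_def)
  have "52 \<le> CARD(bit ^ 'n) - 1"
    using card_mono[OF finite C(1)] C(2) unfolding card_pg_points by simp
  then have "2 * 8 dvd CARD(bit ^ 'n)"
    using two_power_dvd_card_vec_bit[of 4, where 'n='n] by simp
  then have "[walsh C a = 52] (mod 16)" for a
    using walsh_cong_card[OF C(1,3)] C(2) by simp
  moreover have "[52 = -12] (mod (16::int))"
    by (simp add: cong_def)
  ultimately have roots: "0 \<le> (walsh C a - (-12)) * (walsh C a - (-12) - 16)" for a
    by (metis cong_trans cong_imp_consecutive_product_nonneg)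
  have "0 \<le> (int (card C) - walsh C a) * (walsh C a - 4) * (walsh C a - (-12))" for a
    using mult_nonneg_nonneg[OF _ roots[of a], of "int (card C) - walsh C a"] walsh_le_card[of C a]
    by (simp add: mult.commute mult.left_commute)
  from walsh_cubic_bound[OF \<open>0 \<notin> C\<close> \<open>C \<noteq> {}\<close> this]
  show False
    using C(2) by simp
qed

end
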